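(* Let $n$ be an odd positive integer. Then for every integer $\ell\ge 2$, \[\max(n,\ell)=\binom{n}{2}-\left\lfloor\frac{n}{2}\right\rfloor.\] Moreover, $\overline{M_n}$ is (up to isomorphism) the unique $N$-AW graph of maximum size on $n$ vertices.
   Context: All graphs are finite and simple; $\overline{G}$ is the complement of $G$. Vertex labels lie in $\mathbb{Z}_\ell$. In the neighborhood Lights Out game on $G$, toggling a vertex $v$ adds $1$ (mod $\ell$) to the label of each vertex of the closed neighborhood $N[v]$; the game is won when all labels are $0$. $G$ is $N$-AW if the game can be won from every initial labeling $V(G)\to\mathbb{Z}_\ell$. $\max(n,\ell)$ is the maximum number of edges of an $N$-AW graph on $n$ vertices. For odd $n$, $M_n$ denotes a near-perfect matching on $n$ vertices: $(n-1)/2$ disjoint edges together with one isolated vertex. *)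

theory Defs
  imports Main
begin

definition simple_graph :: "'a set \<Rightarrow> ('a \<Rightarrow> 'a \<Rightarrow> bool) \<Rightarrow> bool" where
  "simple_graph V E \<longleftrightarrow> finite V \<and> (\<forall>x y. E x y \<longrightarrow> x \<in> V \<and> y \<in> V)
     \<and> (\<forall>x y. E x y \<longrightarrow> E y x) \<and> (\<forall>x. \<not> E x x)"

definition edge_set :: "'a set \<Rightarrow> ('a \<Rightarrow> 'a \<Rightarrow> bool) \<Rightarrow> 'a set set" where
  "edge_set V E = {{x, y} | x y. x \<in> V \<and> y \<in> V \<and> E x y}"

definition num_edges :: "'a set \<Rightarrow> ('a \<Rightarrow> 'a \<Rightarrow> bool) \<Rightarrow> nat" where
  "num_edges V E = card (edge_set V E)"

definition closed_nbhd :: "'a set \<Rightarrow> ('a \<Rightarrow> 'a \<Rightarrow> bool) \<Rightarrow> 'a \<Rightarrow> 'a set" where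
  "closed_nbhd V E v = insert v {u \<in> V. E v u}"

text \<open>Neighbourhood Lights Out over Z_l: toggling v (t v times) adds t v to every
  label in N[v]; the game is won from labeling c if some toggle counts make all
  labels 0 mod l.\<close>
definition N_AW :: "'a set \<Rightarrow> ('a \<Rightarrow> 'a \<Rightarrow> bool) \<Rightarrow> nat \<Rightarrow> bool" where
  "N_AW V E l \<longleftrightarrow>
     (\<forall>c :: 'a \<Rightarrow> int. \<exists>t :: 'a \<Rightarrow> nat. \<forall>u \<in> V.
        (c u + int (\<Sum>v \<in> {v \<in> V. u \<in> closed_nbhd V E v}. t v)) mod int l = 0)"

definition maxAW :: "nat \<Rightarrow> nat \<Rightarrow> nat" where
  "maxAW n l = Max {num_edges {0..<n} E | E. simple_graph {0..<n} E \<and> N_AW {0..<n} E l}"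

text \<open>Near-perfect matching M_n on {0..<n} (n odd): edges {2i,2i+1}, vertex n-1 isolated.\<close>
definition near_perfect_matching :: "nat \<Rightarrow> nat \<Rightarrow> nat \<Rightarrow> bool" where
  "near_perfect_matching n x y \<longleftrightarrow> x < n \<and> y < n \<and> x \<noteq> y \<and> x div 2 = y div 2"

definition complement :: "'a set \<Rightarrow> ('a \<Rightarrow> 'a \<Rightarrow> bool) \<Rightarrow> 'a \<Rightarrow> 'a \<Rightarrow> bool" where
  "complement V E x y \<longleftrightarrow> x \<in> V \<and> y \<in> V \<and> x \<noteq> y \<and> \<not> E x y"

definition graph_iso :: "'a set \<Rightarrow> ('a \<Rightarrow> 'a \<Rightarrow> bool) \<Rightarrow> 'b set \<Rightarrow> ('b \<Rightarrow> 'b \<Rightarrow> bool) \<Rightarrow> bool" where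
  "graph_iso V E W F \<longleftrightarrow> (\<exists>f. bij_betw f V W \<and> (\<forall>x \<in> V. \<forall>y \<in> V. E x y \<longleftrightarrow> F (f x) (f y)))"

end

theory Submission
  imports Defs
begin

(* Over Z_l with l >= 2, an N-AW graph has no two distinct vertices with the same closed
   neighbourhood: from the labeling with a single 1 at one of them, both receive the same
   number of toggles, although their labels must change by amounts differing by 1 mod l.
   Hence there is at most one universal vertex, i.e. the non-edges cover all vertices but
   one. For n = 2m+1 this forces at least m non-edges, and exactly m only when they are
   pairwise disjoint, i.e. form a near-perfect matching. Conversely, in the complement of M_n
   the closed neighbourhood of a matched vertex misses only its partner, which makes the
   Lights Out system explicitly solvable over the integers. *)

lemma simple_graph_complement:
  assumes "simple_graph V E"
  shows "simple_graph V (complement V E)"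
  using assms unfolding simple_graph_def complement_def by auto

lemma complement_complement:
  assumes "simple_graph V E"
  shows "complement V (complement V E) = E"
  using assms unfolding simple_graph_def complement_def by (intro ext) auto

lemma edge_set_subset_2_subsets:
  assumes "simple_graph V E"
  shows "edge_set V E \<subseteq> {e. e \<subseteq> V \<and> card e = 2}"
  using assms unfolding simple_graph_def edge_set_def by (auto simp: card_2_iff) blast

lemma finite_edge_set:
  assumes "simple_graph V E"
  shows "finite (edge_set V E)"
proof -
  have "finite V" using assms by (simp add: simple_graph_def)
  then show ?thesis
    using edge_set_subset_2_subsets[OF assms] by (auto intro: finite_subset[of _ "Pow V"])
qed

lemma doubleton_in_edge_set_iff:
  assumes "simple_graph V E" "x \<in> V" "y \<in> V"
  shows "{x, y} \<in> edge_set V E \<longleftrightarrow> E x y"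
proof
  assume "{x, y} \<in> edge_set V E"
  then obtain a b where "{x, y} = {a, b}" "E a b" unfolding edge_set_def by blast
  then show "E x y" using assms(1) unfolding simple_graph_def doubleton_eq_iff by metis
qed (use assms in \<open>auto simp: edge_set_def\<close>)

lemma num_edges_add_num_edges_complement:
  assumes G: "simple_graph V E"
  shows "num_edges V E + num_edges V (complement V E) = card V choose 2"
proof -
  have fin: "finite V" using G by (simp add: simple_graph_def)
  have G': "simple_graph V (complement V E)" using G by (rule simple_graph_complement)
  have "edge_set V E \<union> edge_set V (complement V E) = {e. e \<subseteq> V \<and> card e = 2}"
  proof (intro equalityI subsetI)
    fix e assume "e \<in> {e. e \<subseteq> V \<and> card e = 2}"
    then obtain x y where "e = {x, y}" "x \<in> V" "y \<in> V" "x \<noteq> y" by (auto simp: card_2_iff)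
    then show "e \<in> edge_set V E \<union> edge_set V (complement V E)"
      using doubleton_in_edge_set_iff[OF G] doubleton_in_edge_set_iff[OF G']
      by (auto simp: complement_def)
  qed (use edge_set_subset_2_subsets[OF G] edge_set_subset_2_subsets[OF G'] in blast)
  moreover have "edge_set V E \<inter> edge_set V (complement V E) = {}"
  proof (rule equals0I)
    fix e assume e: "e \<in> edge_set V E \<inter> edge_set V (complement V E)"
    then obtain x y where "e = {x, y}" "x \<in> V" "y \<in> V" "E x y" unfolding edge_set_def by blast
    then show False
      using e doubleton_in_edge_set_iff[OF G'] by (simp add: complement_def)
  qed
  ultimately show ?thesis
    unfolding num_edges_def
    using card_Un_disjoint[OF finite_edge_set[OF G] finite_edge_set[OF G']] n_subsets[OF fin, of 2]
    by simp
qed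

lemma graph_iso_of_edge_set:
  assumes "simple_graph V E" "simple_graph W F" "bij_betw h W V"
    and edges: "edge_set V E = image h ` edge_set W F"
  shows "graph_iso V E W F"
  unfolding graph_iso_def
proof (intro exI conjI ballI)
  let ?f = "inv_into W h"
  show "bij_betw ?f V W" using assms(3) by (rule bij_betw_inv_into)
  have inj: "inj_on (image h) (Pow W)"
    using assms(3) by (simp add: bij_betw_def inj_on_image_Pow)
  have "edge_set W F \<subseteq> Pow W"
    using edge_set_subset_2_subsets[OF assms(2)] by blast
  fix x y assume "x \<in> V" "y \<in> V"
  then obtain a b where ab: "a \<in> W" "b \<in> W" "x = h a" "y = h b"
    using assms(3) by (auto simp: bij_betw_def)
  then have "?f x = a" "?f y = b"
    using assms(3) by (auto simp: bij_betw_def)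
  have "h ` {a, b} \<in> image h ` edge_set W F \<longleftrightarrow> {a, b} \<in> edge_set W F"
    using ab(1,2) by (intro inj_on_image_mem_iff[OF inj _ \<open>edge_set W F \<subseteq> Pow W\<close>]) simp
  then show "E x y \<longleftrightarrow> F (?f x) (?f y)"
    using ab \<open>?f x = a\<close> \<open>?f y = b\<close> \<open>x \<in> V\<close> \<open>y \<in> V\<close>
      doubleton_in_edge_set_iff[OF assms(1)] doubleton_in_edge_set_iff[OF assms(2)]
    by (simp add: edges)
qed

lemma graph_iso_complement:
  assumes "graph_iso V E W F"
  shows "graph_iso V (complement V E) W (complement W F)"
proof -
  obtain f where f: "bij_betw f V W" "\<forall>x \<in> V. \<forall>y \<in> V. E x y \<longleftrightarrow> F (f x) (f y)"
    using assms unfolding graph_iso_def by blast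
  show ?thesis unfolding graph_iso_def
  proof (intro exI conjI ballI)
    fix x y assume xy: "x \<in> V" "y \<in> V"
    then have "f x \<in> W" "f y \<in> W" using f(1) by (auto dest: bij_betwE)
    moreover have "x = y \<longleftrightarrow> f x = f y"
      using f(1) xy unfolding bij_betw_def by (auto dest: inj_onD)
    moreover have "E x y \<longleftrightarrow> F (f x) (f y)" using f(2) xy by blast
    ultimately show "complement V E x y \<longleftrightarrow> complement W F (f x) (f y)"
      using xy unfolding complement_def by blast
  qed (rule f(1))
qed

lemma column_eq_closed_nbhd:
  assumes "simple_graph V E" "u \<in> V"
  shows "{v \<in> V. u \<in> closed_nbhd V E v} = closed_nbhd V E u"
  using assms unfolding simple_graph_def closed_nbhd_def by auto

lemma N_AW_inj_on_closed_nbhd: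
  assumes G: "simple_graph V E" and AW: "N_AW V E l" and l: "2 \<le> l"
  shows "inj_on (closed_nbhd V E) V"
proof (rule inj_onI, rule ccontr)
  fix x y assume xy: "x \<in> V" "y \<in> V" "closed_nbhd V E x = closed_nbhd V E y" "x \<noteq> y"
  from AW[unfolded N_AW_def, rule_format, of "\<lambda>u. if u = x then 1 else 0"]
  obtain t :: "'a \<Rightarrow> nat" where t: "\<And>u. u \<in> V \<Longrightarrow>
      ((if u = x then 1 else 0) + int (\<Sum>v \<in> {v \<in> V. u \<in> closed_nbhd V E v}. t v)) mod int l = 0"
    by blast
  define s where "s = int (\<Sum>v \<in> closed_nbhd V E x. t v)"
  have "int l dvd 1 + s"
    using t[OF xy(1)] column_eq_closed_nbhd[OF G xy(1)] by (simp add: s_def mod_eq_0_iff_dvd)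
  moreover have "int l dvd s"
    using t[OF xy(2)] column_eq_closed_nbhd[OF G xy(2)] xy(3,4) by (simp add: s_def mod_eq_0_iff_dvd)
  ultimately have "int l dvd 1"
    by (metis add_diff_cancel_right' dvd_diff)
  then show False using l by simp
qed

lemma closed_nbhd_eq_if_uncovered_by_non_edges:
  assumes G: "simple_graph V E" and x: "x \<in> V" "x \<notin> \<Union>(edge_set V (complement V E))"
  shows "closed_nbhd V E x = V"
proof -
  have "E x v" if "v \<in> V" "v \<noteq> x" for v
    using x that doubleton_in_edge_set_iff[OF simple_graph_complement[OF G] x(1) that(1)]
    by (auto simp: complement_def)
  then show ?thesis using G x(1) unfolding simple_graph_def closed_nbhd_def by auto
qed

lemma N_AW_card_le_card_Union_non_edges:
  assumes G: "simple_graph V E" and AW: "N_AW V E l" and l: "2 \<le> l"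
  shows "card V \<le> card (\<Union>(edge_set V (complement V E))) + 1"
proof -
  let ?U = "\<Union>(edge_set V (complement V E))"
  have "card (V - ?U) \<le> card {V}"
  proof (rule card_inj_on_le)
    show "inj_on (closed_nbhd V E) (V - ?U)"
      using N_AW_inj_on_closed_nbhd[OF G AW l] by (rule inj_on_subset) blast
    show "closed_nbhd V E ` (V - ?U) \<subseteq> {V}"
      using closed_nbhd_eq_if_uncovered_by_non_edges[OF G] by blast
  qed simp
  moreover have "card V \<le> card ?U + card (V - ?U)"
  proof -
    have "?U \<subseteq> V"
      using edge_set_subset_2_subsets[OF simple_graph_complement[OF G]] by blast
    then have "V = ?U \<union> (V - ?U)" by blast
    then show ?thesis by (metis card_Un_le)
  qed
  ultimately show ?thesis by simp
qed

lemma sum_card_edge_set: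
  assumes "simple_graph V E"
  shows "sum card (edge_set V E) = 2 * num_edges V E"
  using edge_set_subset_2_subsets[OF assms] unfolding num_edges_def
  by (subst sum.cong[OF refl, of _ _ "\<lambda>_. 2"]) auto

lemma N_AW_card_le_num_non_edges:
  assumes G: "simple_graph V E" and AW: "N_AW V E l" and l: "2 \<le> l"
  shows "card V \<le> 2 * num_edges V (complement V E) + 1"
  using N_AW_card_le_card_Union_non_edges[OF assms]
    card_Union_le_sum_card[of "edge_set V (complement V E)"]
    sum_card_edge_set[OF simple_graph_complement[OF G]]
  by linarith

lemma pairwise_disjnt_if_card_Union_eq_sum_card:
  assumes fin: "finite C" "\<forall>A \<in> C. finite A" and eq: "card (\<Union>C) = sum card C"
  shows "pairwise disjnt C"
proof (rule pairwiseI, rule ccontr)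
  fix A B assume AB: "A \<in> C" "B \<in> C" "A \<noteq> B" "\<not> disjnt A B"
  let ?R = "C - {A, B}"
  have "card (\<Union>C) \<le> card (A \<union> B) + card (\<Union>?R)"
  proof -
    have "\<Union>C = (A \<union> B) \<union> \<Union>?R" using AB(1,2) by blast
    then show ?thesis by (metis card_Un_le)
  qed
  also have "\<dots> < card A + card B + sum card ?R"
  proof -
    have "card (A \<inter> B) > 0" using AB(4) fin AB(1) by (auto simp: disjnt_def card_gt_0_iff)
    then have "card (A \<union> B) < card A + card B"
      using card_Un_Int[of A B] fin AB(1,2) by simp
    then show ?thesis using card_Union_le_sum_card[of ?R] by linarith
  qed
  also have "\<dots> = sum card C"
    using sum.subset_diff[of "{A, B}" C card] fin(1) AB(1-3) by simp
  finally show False using eq by simp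
qed

lemma matching_enumeration:
  assumes "finite C" "card C = m" "\<forall>e \<in> C. card e = 2" "pairwise disjnt C"
  shows "\<exists>h. inj_on h {..<2*m} \<and> h ` {..<2*m} = \<Union>C
    \<and> C = (\<lambda>i. {h (2*i), h (2*i+1)}) ` {..<m}"
  using assms
proof (induction m arbitrary: C)
  case 0
  then show ?case by simp
next
  case (Suc m)
  then have "C \<noteq> {}" by auto
  then obtain e where e: "e \<in> C" by blast
  let ?C' = "C - {e}"
  have "\<exists>h. inj_on h {..<2*m} \<and> h ` {..<2*m} = \<Union>?C'
      \<and> ?C' = (\<lambda>i. {h (2*i), h (2*i+1)}) ` {..<m}"
  proof (rule Suc.IH)
    show "pairwise disjnt ?C'" using Suc.prems(4) by (rule pairwise_subset) blast
  qed (use Suc.prems e in auto)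
  then obtain h where h: "inj_on h {..<2*m}" "h ` {..<2*m} = \<Union>?C'"
      "?C' = (\<lambda>i. {h (2*i), h (2*i+1)}) ` {..<m}"
    by blast
  obtain a b where ab: "e = {a, b}" "a \<noteq> b"
    using Suc.prems(3) e card_2_iff by metis
  have "disjnt e e'" if "e' \<in> ?C'" for e'
    using Suc.prems(4) e that unfolding pairwise_def by blast
  then have fresh: "a \<notin> \<Union>?C'" "b \<notin> \<Union>?C'"
    using ab(1) by (auto simp: disjnt_def)
  define h' where "h' = h(2*m := a, 2*m+1 := b)"
  have h'_h: "h' ` {..<2*m} = h ` {..<2*m}" "\<And>i. i < m \<Longrightarrow> {h' (2*i), h' (2*i+1)} = {h (2*i), h (2*i+1)}"
    unfolding h'_def by auto
  have dom: "{..<2 * Suc m} = insert (2*m) (insert (2*m+1) {..<2*m})" by auto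
  show ?case
  proof (intro exI conjI)
    have "a \<notin> h ` {..<2*m}" "b \<notin> h ` {..<2*m}" using fresh h(2) by auto
    then show "inj_on h' {..<2 * Suc m}"
      unfolding dom using h(1) ab(2) by (auto simp: h'_def inj_on_def)
    have "h' ` {..<2 * Suc m} = {a, b} \<union> h ` {..<2*m}"
      unfolding dom image_insert h'_h(1) by (simp add: h'_def)
    also have "\<dots> = \<Union>C" using h(2) e ab(1) by blast
    finally show "h' ` {..<2 * Suc m} = \<Union>C" .
    have "(\<lambda>i. {h' (2*i), h' (2*i+1)}) ` {..<m} = ?C'"
      using h'_h(2) h(3) by (auto intro: image_cong)
    then show "C = (\<lambda>i. {h' (2*i), h' (2*i+1)}) ` {..<Suc m}"
      using e ab(1) by (auto simp: lessThan_Suc h'_def)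
  qed
qed

lemma simple_graph_near_perfect_matching: "simple_graph {0..<n} (near_perfect_matching n)"
  unfolding simple_graph_def near_perfect_matching_def by auto

lemma edge_set_near_perfect_matching:
  "edge_set {0..<2*m+1} (near_perfect_matching (2*m+1)) = (\<lambda>i. {2*i, 2*i+1}) ` {..<m}"
proof (intro set_eqI iffI)
  fix e assume "e \<in> edge_set {0..<2*m+1} (near_perfect_matching (2*m+1))"
  then obtain x y where xy: "e = {x, y}" "x < 2*m+1" "y < 2*m+1" "x \<noteq> y" "x div 2 = y div 2"
    unfolding edge_set_def near_perfect_matching_def by auto
  then have "x div 2 < m" "{x, y} = {2 * (x div 2), 2 * (x div 2) + 1}" by auto
  then show "e \<in> (\<lambda>i. {2*i, 2*i+1}) ` {..<m}" using xy(1) by blast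
next
  fix e assume "e \<in> (\<lambda>i. {2*i, 2*i+1}) ` {..<m}"
  then obtain i where "i < m" "e = {2*i, 2*i+1}" by blast
  then show "e \<in> edge_set {0..<2*m+1} (near_perfect_matching (2*m+1))"
    unfolding edge_set_def near_perfect_matching_def by fastforce
qed

lemma graph_iso_complement_near_perfect_matching:
  assumes G: "simple_graph V E"
    and disj: "pairwise disjnt (edge_set V (complement V E))"
    and card: "num_edges V (complement V E) = m"
    and w: "V = insert w (\<Union>(edge_set V (complement V E)))" "w \<notin> \<Union>(edge_set V (complement V E))"
  shows "graph_iso V E {0..<2*m+1} (complement {0..<2*m+1} (near_perfect_matching (2*m+1)))"
proof -
  let ?C = "edge_set V (complement V E)" and ?N = "{0..<2*m+1}" and ?M = "near_perfect_matching (2*m+1)"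
  have G': "simple_graph V (complement V E)" using G by (rule simple_graph_complement)
  obtain h where h: "inj_on h {..<2*m}" "h ` {..<2*m} = \<Union>?C" "?C = (\<lambda>i. {h (2*i), h (2*i+1)}) ` {..<m}"
    using matching_enumeration[OF finite_edge_set[OF G'] card[unfolded num_edges_def] _ disj]
      edge_set_subset_2_subsets[OF G'] by blast
  define h' where "h' = h(2*m := w)"
  have N: "?N = insert (2*m) {..<2*m}" by auto
  have h'_h: "h' ` {..<2*m} = h ` {..<2*m}" "\<And>i. i < m \<Longrightarrow> {h' (2*i), h' (2*i+1)} = {h (2*i), h (2*i+1)}"
    unfolding h'_def by auto
  have "bij_betw h' ?N V"
    unfolding bij_betw_def N using h w h'_h(1) by (auto simp: h'_def inj_on_def)
  moreover have "?C = image h' ` edge_set ?N ?M"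
    unfolding edge_set_near_perfect_matching image_image h(3) using h'_h(2) by (auto intro: image_cong)
  ultimately have "graph_iso V (complement V E) ?N ?M"
    using graph_iso_of_edge_set[OF G' simple_graph_near_perfect_matching] by blast
  then show ?thesis
    using graph_iso_complement complement_complement[OF G] by metis
qed

lemma N_AW_if_integer_solvable:
  assumes solvable: "\<And>b :: 'a \<Rightarrow> int. \<exists>T. \<forall>u \<in> V. (\<Sum>v \<in> {v \<in> V. u \<in> closed_nbhd V E v}. T v) = b u"
    and l: "0 < l"
  shows "N_AW V E l"
  unfolding N_AW_def
proof
  fix c :: "'a \<Rightarrow> int"
  obtain T where T: "\<forall>u \<in> V. (\<Sum>v \<in> {v \<in> V. u \<in> closed_nbhd V E v}. T v) = - c u"
    using solvable[of "\<lambda>u. - c u"] by blast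
  show "\<exists>t. \<forall>u \<in> V. (c u + int (\<Sum>v \<in> {v \<in> V. u \<in> closed_nbhd V E v}. t v)) mod int l = 0"
  proof (intro exI ballI)
    fix u assume u: "u \<in> V"
    let ?S = "{v \<in> V. u \<in> closed_nbhd V E v}"
    have "int (\<Sum>v \<in> ?S. nat (T v mod int l)) = (\<Sum>v \<in> ?S. T v mod int l)"
      using l by (simp add: of_nat_sum)
    then have "(c u + int (\<Sum>v \<in> ?S. nat (T v mod int l))) mod int l
        = (c u + (\<Sum>v \<in> ?S. T v mod int l) mod int l) mod int l"
      by (simp add: mod_add_right_eq)
    also have "\<dots> = (c u + (\<Sum>v \<in> ?S. T v)) mod int l"
      by (simp add: mod_sum_eq mod_add_right_eq)
    also have "\<dots> = 0" using T u by simp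
    finally show "(c u + int (\<Sum>v \<in> ?S. nat (T v mod int l))) mod int l = 0" .
  qed
qed

definition partner :: "nat \<Rightarrow> nat" where
  "partner u = (if even u then u + 1 else u - 1)"

lemma partner_partner [simp]: "partner (partner u) = u"
  unfolding partner_def by auto

lemma partner_less: "u < 2*m \<Longrightarrow> partner u < 2*m"
  unfolding partner_def by (cases "even u") (auto elim!: evenE)

lemma near_perfect_matching_iff_partner:
  assumes "u < 2*m"
  shows "near_perfect_matching (2*m+1) u v \<longleftrightarrow> v = partner u"
proof (cases "even u")
  case True
  then obtain k where "u = 2*k" by (rule evenE)
  then show ?thesis using assms unfolding near_perfect_matching_def partner_def by auto
next
  case False
  then obtain k where "u = 2*k+1" by (rule oddE)
  then show ?thesis using assms unfolding near_perfect_matching_def partner_def by auto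
qed

lemma not_near_perfect_matching_last: "\<not> near_perfect_matching (2*m+1) (2*m) v"
  unfolding near_perfect_matching_def by auto

lemma closed_nbhd_complement:
  assumes "simple_graph V E" "u \<in> V"
  shows "closed_nbhd V (complement V E) u = V - {v. E u v}"
  using assms unfolding simple_graph_def closed_nbhd_def complement_def by auto

lemma N_AW_complement_near_perfect_matching:
  assumes "0 < l"
  shows "N_AW {0..<2*m+1} (complement {0..<2*m+1} (near_perfect_matching (2*m+1))) l"
proof (rule N_AW_if_integer_solvable[OF _ assms])
  let ?N = "{0..<2*m+1}" and ?M = "near_perfect_matching (2*m+1)"
  have column: "{v \<in> ?N. u \<in> closed_nbhd ?N (complement ?N ?M) v}
      = (if u = 2*m then ?N else ?N - {partner u})" if "u \<in> ?N" for u
  proof -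
    have "{v. ?M u v} = (if u = 2*m then {} else {partner u})"
      using that near_perfect_matching_iff_partner not_near_perfect_matching_last by auto
    moreover have "closed_nbhd ?N (complement ?N ?M) u = ?N - {v. ?M u v}"
      using simple_graph_near_perfect_matching that by (rule closed_nbhd_complement)
    ultimately show ?thesis
      using column_eq_closed_nbhd[OF simple_graph_complement[OF simple_graph_near_perfect_matching] that]
      by simp
  qed
  fix b :: "nat \<Rightarrow> int"
  \<comment> \<open>Column u misses only partner u, so once the total is b (2m), the equation at u
     reads T (partner u) = b (2m) - b u; the value T (2m) makes the total right.\<close>
  define T where "T v = (if v = 2*m then b (2*m) - int (2*m) * b (2*m) + (\<Sum>u < 2*m. b u)
     else b (2*m) - b (partner v))" for v
  have total: "(\<Sum>v \<in> ?N. T v) = b (2*m)"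
  proof -
    have "(\<Sum>v < 2*m. b (partner v)) = (\<Sum>v < 2*m. b v)"
      by (rule sum.reindex_bij_witness[of _ partner partner]) (auto simp: partner_less)
    moreover have "(\<Sum>v < 2*m. T v) = (\<Sum>v < 2*m. b (2*m) - b (partner v))"
      unfolding T_def by (intro sum.cong) auto
    moreover have "?N = insert (2*m) {..<2*m}" by auto
    ultimately show ?thesis by (simp add: T_def sum_subtractf)
  qed
  show "\<exists>T. \<forall>u \<in> ?N. (\<Sum>v \<in> {v \<in> ?N. u \<in> closed_nbhd ?N (complement ?N ?M) v}. T v) = b u"
  proof (intro exI ballI)
    fix u assume u: "u \<in> ?N"
    show "(\<Sum>v \<in> {v \<in> ?N. u \<in> closed_nbhd ?N (complement ?N ?M) v}. T v) = b u"
    proof (cases "u = 2*m")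
      case False
      then have "u < 2*m" using u by simp
      then have "(\<Sum>v \<in> ?N - {partner u}. T v) = b (2*m) - T (partner u)"
        using total partner_less[OF \<open>u < 2*m\<close>] by (simp add: sum_diff1)
      also have "\<dots> = b u" using partner_less[OF \<open>u < 2*m\<close>] by (simp add: T_def)
      finally show ?thesis using column[OF u] False by simp
    qed (use column[OF u] total in simp)
  qed
qed

lemma num_edges_complement_near_perfect_matching:
  "num_edges {0..<2*m+1} (complement {0..<2*m+1} (near_perfect_matching (2*m+1)))
     = (2*m+1 choose 2) - m"
proof -
  have "inj_on (\<lambda>i::nat. {2*i, 2*i+1}) {..<m}"
  proof (rule inj_onI)
    fix i j :: nat assume "{2*i, 2*i+1} = {2*j, 2*j+1}"
    then have "2*i \<in> {2*j, 2*j+1}" by blast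
    then show "i = j" by auto
  qed
  then have "num_edges {0..<2*m+1} (near_perfect_matching (2*m+1)) = m"
    unfolding num_edges_def edge_set_near_perfect_matching by (simp add: card_image)
  then show ?thesis
    using num_edges_add_num_edges_complement[OF simple_graph_near_perfect_matching, of "2*m+1"]
    by simp
qed

lemma N_AW_num_edges_le:
  assumes G: "simple_graph V E" and AW: "N_AW V E l" and l: "2 \<le> l" and n: "card V = 2*m+1"
  shows "num_edges V E \<le> (2*m+1 choose 2) - m"
proof -
  have "num_edges V E + num_edges V (complement V E) = (2*m+1 choose 2)"
    using num_edges_add_num_edges_complement[OF G] n by simp
  then show ?thesis using N_AW_card_le_num_non_edges[OF G AW l] n by linarith
qed

lemma N_AW_max_num_edges_graph_iso:
  assumes G: "simple_graph V E" and AW: "N_AW V E l" and l: "2 \<le> l" and n: "card V = 2*m+1"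
    and max: "num_edges V E = (2*m+1 choose 2) - m"
  shows "graph_iso V E {0..<2*m+1} (complement {0..<2*m+1} (near_perfect_matching (2*m+1)))"
proof -
  let ?C = "edge_set V (complement V E)"
  have G': "simple_graph V (complement V E)" using G by (rule simple_graph_complement)
  have "num_edges V E + num_edges V (complement V E) = (2*m+1 choose 2)"
    using num_edges_add_num_edges_complement[OF G] n by simp
  then have non_edges: "num_edges V (complement V E) = m"
    using N_AW_card_le_num_non_edges[OF G AW l] n max by linarith
  then have sum: "sum card ?C = 2*m"
    using sum_card_edge_set[OF G'] by simp
  have Union: "card (\<Union>?C) = 2*m"
    using N_AW_card_le_card_Union_non_edges[OF G AW l] card_Union_le_sum_card[of ?C] n sum
    by linarith
  have "pairwise disjnt ?C"
  proof (rule pairwise_disjnt_if_card_Union_eq_sum_card)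
    show "\<forall>A \<in> ?C. finite A"
    proof
      fix A assume "A \<in> ?C"
      then have "card A = 2" using edge_set_subset_2_subsets[OF G'] by blast
      then show "finite A" by (intro card_ge_0_finite) simp
    qed
  qed (use finite_edge_set[OF G'] sum Union in auto)
  moreover obtain w where "V = insert w (\<Union>?C)" "w \<notin> \<Union>?C"
  proof -
    have "\<Union>?C \<subseteq> V" using edge_set_subset_2_subsets[OF G'] by blast
    then have "card (V - \<Union>?C) = 1"
      using Union n G by (simp add: card_Diff_subset finite_subset simple_graph_def)
    then obtain w where "V - \<Union>?C = {w}" by (rule card_1_singletonE)
    then show ?thesis using that \<open>\<Union>?C \<subseteq> V\<close> by blast
  qed
  ultimately show ?thesis using graph_iso_complement_near_perfect_matching[OF G _ non_edges] by blast
qed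

theorem proposition4p2:
  fixes n l :: nat
  assumes "odd n" and "n > 0" and "l \<ge> 2"
  shows "maxAW n l = (n choose 2) - n div 2
    \<and> simple_graph {0..<n} (complement {0..<n} (near_perfect_matching n))
    \<and> N_AW {0..<n} (complement {0..<n} (near_perfect_matching n)) l
    \<and> num_edges {0..<n} (complement {0..<n} (near_perfect_matching n)) = maxAW n l
    \<and> (\<forall>(V :: 'a set) E. simple_graph V E \<and> card V = n \<and> N_AW V E l
          \<and> num_edges V E = maxAW n l
          \<longrightarrow> graph_iso V E {0..<n} (complement {0..<n} (near_perfect_matching n)))"
proof -
  obtain m where n: "n = 2*m+1" using \<open>odd n\<close> oddE by blast
  let ?F = "complement {0..<n} (near_perfect_matching n)"
  have simple: "simple_graph {0..<n} ?F"
    by (intro simple_graph_complement simple_graph_near_perfect_matching)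
  have AW: "N_AW {0..<n} ?F l"
    using N_AW_complement_near_perfect_matching[of l m] \<open>l \<ge> 2\<close> n by simp
  have edges: "num_edges {0..<n} ?F = (n choose 2) - m"
    using num_edges_complement_near_perfect_matching[of m] n by simp
  have max: "maxAW n l = (n choose 2) - m"
    unfolding maxAW_def
  proof (rule Max_eqI)
    show "x \<le> (n choose 2) - m"
      if "x \<in> {num_edges {0..<n} E | E. simple_graph {0..<n} E \<and> N_AW {0..<n} E l}" for x
      using that N_AW_num_edges_le[of "{0..<n}" _ l m] \<open>l \<ge> 2\<close> n by auto
    then show "finite {num_edges {0..<n} E | E. simple_graph {0..<n} E \<and> N_AW {0..<n} E l}"
      by (meson finite_atMost atMost_iff finite_subset subsetI)
    show "(n choose 2) - m \<in> {num_edges {0..<n} E | E. simple_graph {0..<n} E \<and> N_AW {0..<n} E l}"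
      using simple AW edges by (intro CollectI exI[of _ ?F]) simp
  qed
  show ?thesis
    using simple AW edges max n N_AW_max_num_edges_graph_iso[of _ _ l m] \<open>l \<ge> 2\<close> by auto
qed

end
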